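(* Let $\mathbf{x}$ be an amalgamation try, $G_\ell = G_{\mathbf{x},\ell}$ for $\ell = 0,1,2$, and $G_3 = G_{\mathbf{x}}$. Let $H_1$ be a subgroup of $G_1$, $H_0 = H_1 \cap G_0$, $H_1' = \mathbf{j}_{\mathbf{x},1}(H_1)$, and $\mathbf{I}_1 = \mathbf{I}_{\mathbf{x},1} \cap H_1$. Let $H_2$ be a subgroup of $G_2$, $H_2' = \mathbf{j}_{\mathbf{x},2}(H_2)$ and $\mathbf{I}_2 = \mathbf{I}_{\mathbf{x},2} \cap H_2$. Assume: (e) $H_1 = \bigcup\{bH_0 : b \in \mathbf{I}_1\}$; (f) if $g \in \mathbf{I}_{\mathbf{x},1}$ and $b \in \mathbf{I}_1$ then $gb \in \mathbf{I}_{\mathbf{x},1}$; (g) the subgroups $G_0$ and $H_1$ of $G_1$ commute elementwise; (h) $H_2$ commutes elementwise with $H_0$ in $G_2$; (i) $H_2 = \bigcup\{bH_0 : b \in \mathbf{I}_2\}$. Then the subgroups $H_1'$ and $H_2'$ of $G_3$ commute elementwise.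
   Context: A group is locally finite if every finitely generated subgroup is finite. An amalgamation try is $\mathbf{x} = (G_{\mathbf{x},0},G_{\mathbf{x},1},G_{\mathbf{x},2},\mathbf{I}_{\mathbf{x},1},\mathbf{I}_{\mathbf{x},2})$ where $G_{\mathbf{x},1},G_{\mathbf{x},2}$ are locally finite groups with common subgroup $G_{\mathbf{x},0}$, $\mathbf{I}_{\mathbf{x},\ell}$ is a set of representatives (without repetition) of the left cosets of $G_{\mathbf{x},0}$ in $G_{\mathbf{x},\ell}$, and $e \in \mathbf{I}_{\mathbf{x},1}\cap\mathbf{I}_{\mathbf{x},2}$. With $\mathcal{U}_{\mathbf{x}} = \{(g_0,g_1,g_2): g_0 \in G_{\mathbf{x},0}, g_\ell \in \mathbf{I}_{\mathbf{x},\ell}\}$, for $g \in G_{\mathbf{x},1}$ the permutation $\mathbf{j}_{\mathbf{x},1}(g)$ maps $(g_0,g_1,g_2)$ to $(g_0',g_1',g_2)$ where $(g_1',g_0') \in \mathbf{I}_{\mathbf{x},1}\times G_{\mathbf{x},0}$ is unique with $g_1'g_0' = g_1g_0g$; symmetrically $\mathbf{j}_{\mathbf{x},2}(g)$ for $g \in G_{\mathbf{x},2}$ maps $(g_0,g_1,g_2)$ to $(g_0',g_1,g_2')$ with $g_2'g_0' = g_2g_0g$. Permutations act on the right (product $f_1f_2$ is $u \mapsto f_2(f_1(u))$) and $G_{\mathbf{x}}$ is the permutation group on $\mathcal{U}_{\mathbf{x}}$ generated by $\mathbf{j}_{\mathbf{x},1}(G_{\mathbf{x},1}) \cup \mathbf{j}_{\mathbf{x},2}(G_{\mathbf{x},2})$.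 *)

theory Defs
  imports "HOL-Algebra.Algebra"
begin

definition locally_finite :: "('a, 'b) monoid_scheme \<Rightarrow> bool" where
  "locally_finite G \<longleftrightarrow> group G \<and>
     (\<forall>S. S \<subseteq> carrier G \<and> finite S \<longrightarrow> finite (generate G S))"

definition left_coset_reps :: "('a, 'b) monoid_scheme \<Rightarrow> 'a set \<Rightarrow> 'a set \<Rightarrow> bool" where
  "left_coset_reps G H I \<longleftrightarrow> I \<subseteq> carrier G \<and>
     (\<forall>g \<in> carrier G. \<exists>!b. b \<in> I \<and> g \<in> b <#\<^bsub>G\<^esub> H)"

text \<open>Amalgamation try x = (G0, G1, G2, I1, I2); G0 is given as a common subset
  which is a subgroup of both G1 and G2 with the same operation.\<close>
definition amalg_try ::
  "'a set \<Rightarrow> ('a, 'b) monoid_scheme \<Rightarrow> ('a, 'c) monoid_scheme \<Rightarrow> 'a set \<Rightarrow> 'a set \<Rightarrow> bool" where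
  "amalg_try G0 G1 G2 I1 I2 \<longleftrightarrow>
     locally_finite G1 \<and> locally_finite G2 \<and>
     subgroup G0 G1 \<and> subgroup G0 G2 \<and>
     (\<forall>x \<in> G0. \<forall>y \<in> G0. x \<otimes>\<^bsub>G1\<^esub> y = x \<otimes>\<^bsub>G2\<^esub> y) \<and>
     left_coset_reps G1 G0 I1 \<and> left_coset_reps G2 G0 I2 \<and>
     \<one>\<^bsub>G1\<^esub> \<in> I1 \<and> \<one>\<^bsub>G2\<^esub> \<in> I2"

definition amalg_U :: "'a set \<Rightarrow> 'a set \<Rightarrow> 'a set \<Rightarrow> ('a \<times> 'a \<times> 'a) set" where
  "amalg_U G0 I1 I2 = {(g0, g1, g2). g0 \<in> G0 \<and> g1 \<in> I1 \<and> g2 \<in> I2}"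

text \<open>j_{x,1}(g): (g0,g1,g2) |-> (g0',g1',g2) with g1' g0' = g1 g0 g, g1' in I1, g0' in G0.
  Represented as a permutation of U in the sense of BijGroup (extensional outside U).\<close>
definition amalg_j1 ::
  "'a set \<Rightarrow> ('a, 'b) monoid_scheme \<Rightarrow> 'a set \<Rightarrow> 'a set \<Rightarrow> 'a \<Rightarrow> ('a \<times> 'a \<times> 'a \<Rightarrow> 'a \<times> 'a \<times> 'a)" where
  "amalg_j1 G0 G1 I1 I2 g = (\<lambda>u \<in> amalg_U G0 I1 I2.
     (case u of (g0, g1, g2) \<Rightarrow>
       (let p = (THE p. fst p \<in> I1 \<and> snd p \<in> G0 \<and>
                        fst p \<otimes>\<^bsub>G1\<^esub> snd p = g1 \<otimes>\<^bsub>G1\<^esub> g0 \<otimes>\<^bsub>G1\<^esub> g)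
        in (snd p, fst p, g2))))"

definition amalg_j2 ::
  "'a set \<Rightarrow> ('a, 'b) monoid_scheme \<Rightarrow> 'a set \<Rightarrow> 'a set \<Rightarrow> 'a \<Rightarrow> ('a \<times> 'a \<times> 'a \<Rightarrow> 'a \<times> 'a \<times> 'a)" where
  "amalg_j2 G0 G2 I1 I2 g = (\<lambda>u \<in> amalg_U G0 I1 I2.
     (case u of (g0, g1, g2) \<Rightarrow>
       (let p = (THE p. fst p \<in> I2 \<and> snd p \<in> G0 \<and>
                        fst p \<otimes>\<^bsub>G2\<^esub> snd p = g2 \<otimes>\<^bsub>G2\<^esub> g0 \<otimes>\<^bsub>G2\<^esub> g)
        in (snd p, g1, fst p))))"

text \<open>G_x: the permutation group on U generated by j1(G1) and j2(G2).
  (BijGroup multiplies by composition; the paper uses the opposite order, which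
  is irrelevant for elementwise commutation.)\<close>
definition amalg_group ::
  "'a set \<Rightarrow> ('a, 'b) monoid_scheme \<Rightarrow> ('a, 'c) monoid_scheme \<Rightarrow> 'a set \<Rightarrow> 'a set
     \<Rightarrow> ('a \<times> 'a \<times> 'a \<Rightarrow> 'a \<times> 'a \<times> 'a) monoid" where
  "amalg_group G0 G1 G2 I1 I2 =
     (BijGroup (amalg_U G0 I1 I2)) \<lparr> carrier :=
        generate (BijGroup (amalg_U G0 I1 I2))
          (amalg_j1 G0 G1 I1 I2 ` carrier G1 \<union> amalg_j2 G0 G2 I1 I2 ` carrier G2) \<rparr>"

end

theory Submission
  imports Defs
begin

text \<open>Write every element of \<open>U\<close> as \<open>(g0, g1, g2)\<close> and let \<open>h = b h0\<close> with \<open>b \<in> I1 \<inter> H1\<close> and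
  \<open>h0 \<in> H1 \<inter> G0\<close>, as (e) allows. By (f) and (g), \<open>j1(h)\<close> acts on \<open>U\<close> simply as
  \<open>(g0, g1, g2) \<mapsto> (h0 g0, g1 b, g2)\<close>, without any renormalisation. Since \<open>h0\<close> commutes with
  all of \<open>G0\<close> by (g) and with \<open>H2\<close> by (h), left multiplication of the \<open>G0\<close>-coordinate by
  \<open>h0\<close> commutes with every \<open>j2(k)\<close>, \<open>k \<in> H2\<close>; the \<open>I1\<close>-coordinate is not seen by \<open>j2\<close> at
  all.\<close>

definition coset_decomp :: "('a, 'b) monoid_scheme \<Rightarrow> 'a set \<Rightarrow> 'a set \<Rightarrow> 'a \<Rightarrow> 'a \<times> 'a" where
  "coset_decomp G K I x = (THE p. fst p \<in> I \<and> snd p \<in> K \<and> fst p \<otimes>\<^bsub>G\<^esub> snd p = x)"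

locale coset_transversal = group G for G (structure) +
  fixes K I
  assumes subgroup_K: "subgroup K G"
    and reps: "left_coset_reps G K I"
begin

lemma reps_subset: "I \<subseteq> carrier G"
  using reps unfolding left_coset_reps_def by blast

lemma K_subset: "K \<subseteq> carrier G"
  using subgroup_K by (rule subgroup.subset)

lemma decomp_exists:
  assumes "x \<in> carrier G"
  obtains i k where "i \<in> I" "k \<in> K" "i \<otimes> k = x"
  using assms reps unfolding left_coset_reps_def l_coset_def by blast

lemma decomp_unique:
  assumes "i \<in> I" "i' \<in> I" "k \<in> K" "k' \<in> K" "i \<otimes> k = i' \<otimes> k'"
  shows "i = i'" "k = k'"
proof -
  have in_G: "i \<otimes> k \<in> carrier G"
    using assms reps_subset K_subset by blast
  have "i \<otimes> k \<in> i <# K" "i' \<otimes> k' \<in> i' <# K"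
    using assms(3,4) unfolding l_coset_def by auto
  then have "i \<otimes> k \<in> i <# K" "i \<otimes> k \<in> i' <# K"
    using assms(5) by simp_all
  then show "i = i'"
    using reps in_G assms(1,2) unfolding left_coset_reps_def by metis
  then show "k = k'"
    using assms reps_subset K_subset l_cancel[of i k k'] by blast
qed

lemma coset_decomp_mult:
  assumes "i \<in> I" "k \<in> K"
  shows "coset_decomp G K I (i \<otimes> k) = (i, k)"
  unfolding coset_decomp_def
proof (rule the_equality)
  fix p
  assume "fst p \<in> I \<and> snd p \<in> K \<and> fst p \<otimes> snd p = i \<otimes> k"
  then show "p = (i, k)"
    using decomp_unique[of "fst p" i "snd p" k] assms by (cases p) auto
qed (use assms in auto)

end

lemma amalg_tryD:
  assumes "amalg_try G0 G1 G2 I1 I2"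
  shows "coset_transversal G1 G0 I1" "coset_transversal G2 G0 I2"
    and "\<And>a b. a \<in> G0 \<Longrightarrow> b \<in> G0 \<Longrightarrow> a \<otimes>\<^bsub>G1\<^esub> b = a \<otimes>\<^bsub>G2\<^esub> b"
  using assms unfolding amalg_try_def locally_finite_def coset_transversal_def
    coset_transversal_axioms_def
  by auto

lemma amalg_U_iff [simp]: "(g0, g1, g2) \<in> amalg_U G0 I1 I2 \<longleftrightarrow> g0 \<in> G0 \<and> g1 \<in> I1 \<and> g2 \<in> I2"
  by (simp add: amalg_U_def)

lemma amalg_j1_apply:
  assumes "(g0, g1, g2) \<in> amalg_U G0 I1 I2"
  shows "amalg_j1 G0 G1 I1 I2 g (g0, g1, g2) =
    (let p = coset_decomp G1 G0 I1 (g1 \<otimes>\<^bsub>G1\<^esub> g0 \<otimes>\<^bsub>G1\<^esub> g) in (snd p, fst p, g2))"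
  using assms by (simp add: amalg_j1_def coset_decomp_def)

lemma amalg_j2_apply:
  assumes "(g0, g1, g2) \<in> amalg_U G0 I1 I2"
  shows "amalg_j2 G0 G2 I1 I2 g (g0, g1, g2) =
    (let p = coset_decomp G2 G0 I2 (g2 \<otimes>\<^bsub>G2\<^esub> g0 \<otimes>\<^bsub>G2\<^esub> g) in (snd p, g1, fst p))"
  using assms by (simp add: amalg_j2_def coset_decomp_def)

lemma amalg_j1_eq:
  assumes x: "amalg_try G0 G1 G2 I1 I2"
    and "(g0, g1, g2) \<in> amalg_U G0 I1 I2" "i \<in> I1" "k \<in> G0"
    and "i \<otimes>\<^bsub>G1\<^esub> k = g1 \<otimes>\<^bsub>G1\<^esub> g0 \<otimes>\<^bsub>G1\<^esub> g"
  shows "amalg_j1 G0 G1 I1 I2 g (g0, g1, g2) = (k, i, g2)"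
  using assms coset_transversal.coset_decomp_mult[OF amalg_tryD(1)[OF x]]
  by (metis amalg_j1_apply fst_conv snd_conv)

lemma amalg_j2_eq:
  assumes x: "amalg_try G0 G1 G2 I1 I2"
    and "(g0, g1, g2) \<in> amalg_U G0 I1 I2" "i \<in> I2" "k \<in> G0"
    and "i \<otimes>\<^bsub>G2\<^esub> k = g2 \<otimes>\<^bsub>G2\<^esub> g0 \<otimes>\<^bsub>G2\<^esub> g"
  shows "amalg_j2 G0 G2 I1 I2 g (g0, g1, g2) = (k, g1, i)"
  using assms coset_transversal.coset_decomp_mult[OF amalg_tryD(2)[OF x]]
  by (metis amalg_j2_apply fst_conv snd_conv)

lemma extensional_inverses_in_Bij:
  assumes "f \<in> extensional S" "f \<in> S \<rightarrow> S" "f' \<in> S \<rightarrow> S"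
    and "\<And>u. u \<in> S \<Longrightarrow> f' (f u) = u" "\<And>u. u \<in> S \<Longrightarrow> f (f' u) = u"
  shows "f \<in> Bij S"
  using assms bij_betw_byWitness[of S f' f S] unfolding Bij_def by auto

lemma amalg_j1_maps_to_inverse:
  assumes x: "amalg_try G0 G1 G2 I1 I2" and g: "g \<in> carrier G1"
    and u: "u \<in> amalg_U G0 I1 I2"
  shows "amalg_j1 G0 G1 I1 I2 g u \<in> amalg_U G0 I1 I2"
    "amalg_j1 G0 G1 I1 I2 (inv\<^bsub>G1\<^esub> g) (amalg_j1 G0 G1 I1 I2 g u) = u"
proof -
  interpret coset_transversal G1 G0 I1 by (rule amalg_tryD(1)[OF x])
  obtain g0 g1 g2 where u_eq: "u = (g0, g1, g2)" "g0 \<in> G0" "g1 \<in> I1" "g2 \<in> I2"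
    using u unfolding amalg_U_def by auto
  have "g1 \<otimes>\<^bsub>G1\<^esub> g0 \<otimes>\<^bsub>G1\<^esub> g \<in> carrier G1"
    using u_eq g reps_subset K_subset by blast
  then obtain i k where ik: "i \<in> I1" "k \<in> G0" "i \<otimes>\<^bsub>G1\<^esub> k = g1 \<otimes>\<^bsub>G1\<^esub> g0 \<otimes>\<^bsub>G1\<^esub> g"
    by (rule decomp_exists)
  have image: "amalg_j1 G0 G1 I1 I2 g u = (k, i, g2)"
    using amalg_j1_eq[OF x] u_eq ik by simp
  then show "amalg_j1 G0 G1 I1 I2 g u \<in> amalg_U G0 I1 I2"
    using ik u_eq by simp
  have "g1 \<otimes>\<^bsub>G1\<^esub> g0 = i \<otimes>\<^bsub>G1\<^esub> k \<otimes>\<^bsub>G1\<^esub> inv\<^bsub>G1\<^esub> g"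
    using ik(3) u_eq g reps_subset K_subset by (simp add: m_assoc subset_iff)
  then show "amalg_j1 G0 G1 I1 I2 (inv\<^bsub>G1\<^esub> g) (amalg_j1 G0 G1 I1 I2 g u) = u"
    using image amalg_j1_eq[OF x, of k i g2 g1 g0 "inv\<^bsub>G1\<^esub> g"] u_eq ik by simp
qed

lemma amalg_j2_maps_to_inverse:
  assumes x: "amalg_try G0 G1 G2 I1 I2" and g: "g \<in> carrier G2"
    and u: "u \<in> amalg_U G0 I1 I2"
  shows "amalg_j2 G0 G2 I1 I2 g u \<in> amalg_U G0 I1 I2"
    "amalg_j2 G0 G2 I1 I2 (inv\<^bsub>G2\<^esub> g) (amalg_j2 G0 G2 I1 I2 g u) = u"
proof -
  interpret coset_transversal G2 G0 I2 by (rule amalg_tryD(2)[OF x])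
  obtain g0 g1 g2 where u_eq: "u = (g0, g1, g2)" "g0 \<in> G0" "g1 \<in> I1" "g2 \<in> I2"
    using u unfolding amalg_U_def by auto
  have "g2 \<otimes>\<^bsub>G2\<^esub> g0 \<otimes>\<^bsub>G2\<^esub> g \<in> carrier G2"
    using u_eq g reps_subset K_subset by blast
  then obtain i k where ik: "i \<in> I2" "k \<in> G0" "i \<otimes>\<^bsub>G2\<^esub> k = g2 \<otimes>\<^bsub>G2\<^esub> g0 \<otimes>\<^bsub>G2\<^esub> g"
    by (rule decomp_exists)
  have image: "amalg_j2 G0 G2 I1 I2 g u = (k, g1, i)"
    using amalg_j2_eq[OF x] u_eq ik by simp
  then show "amalg_j2 G0 G2 I1 I2 g u \<in> amalg_U G0 I1 I2"
    using ik u_eq by simp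
  have "g2 \<otimes>\<^bsub>G2\<^esub> g0 = i \<otimes>\<^bsub>G2\<^esub> k \<otimes>\<^bsub>G2\<^esub> inv\<^bsub>G2\<^esub> g"
    using ik(3) u_eq g reps_subset K_subset by (simp add: m_assoc subset_iff)
  then show "amalg_j2 G0 G2 I1 I2 (inv\<^bsub>G2\<^esub> g) (amalg_j2 G0 G2 I1 I2 g u) = u"
    using image amalg_j2_eq[OF x, of k g1 i g2 g0 "inv\<^bsub>G2\<^esub> g"] u_eq ik by simp
qed

lemma amalg_j1_in_Bij:
  assumes x: "amalg_try G0 G1 G2 I1 I2" and g: "g \<in> carrier G1"
  shows "amalg_j1 G0 G1 I1 I2 g \<in> Bij (amalg_U G0 I1 I2)"
proof -
  interpret G1: group G1 using amalg_tryD(1)[OF x] by (rule coset_transversal.axioms)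
  show ?thesis
    using amalg_j1_maps_to_inverse[OF x g] amalg_j1_maps_to_inverse[OF x G1.inv_closed[OF g]] g
    by (intro extensional_inverses_in_Bij[where f' = "amalg_j1 G0 G1 I1 I2 (inv\<^bsub>G1\<^esub> g)"])
      (auto simp: amalg_j1_def)
qed

lemma amalg_j2_in_Bij:
  assumes x: "amalg_try G0 G1 G2 I1 I2" and g: "g \<in> carrier G2"
  shows "amalg_j2 G0 G2 I1 I2 g \<in> Bij (amalg_U G0 I1 I2)"
proof -
  interpret G2: group G2 using amalg_tryD(2)[OF x] by (rule coset_transversal.axioms)
  show ?thesis
    using amalg_j2_maps_to_inverse[OF x g] amalg_j2_maps_to_inverse[OF x G2.inv_closed[OF g]] g
    by (intro extensional_inverses_in_Bij[where f' = "amalg_j2 G0 G2 I1 I2 (inv\<^bsub>G2\<^esub> g)"])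
      (auto simp: amalg_j2_def)
qed

lemma amalg_group_mult:
  assumes "a \<in> Bij (amalg_U G0 I1 I2)" "c \<in> Bij (amalg_U G0 I1 I2)"
  shows "a \<otimes>\<^bsub>amalg_group G0 G1 G2 I1 I2\<^esub> c = compose (amalg_U G0 I1 I2) a c"
  using assms by (simp add: amalg_group_def BijGroup_def)

lemma amalg_j1_right_translation:
  assumes x: "amalg_try G0 G1 G2 I1 I2"
    and "b \<in> carrier G1" "h0 \<in> G0" "(y, g1, g2) \<in> amalg_U G0 I1 I2"
    and "g1 \<otimes>\<^bsub>G1\<^esub> b \<in> I1"
    and "y \<otimes>\<^bsub>G1\<^esub> (b \<otimes>\<^bsub>G1\<^esub> h0) = (b \<otimes>\<^bsub>G1\<^esub> h0) \<otimes>\<^bsub>G1\<^esub> y"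
  shows "amalg_j1 G0 G1 I1 I2 (b \<otimes>\<^bsub>G1\<^esub> h0) (y, g1, g2) = (h0 \<otimes>\<^bsub>G1\<^esub> y, g1 \<otimes>\<^bsub>G1\<^esub> b, g2)"
proof -
  interpret coset_transversal G1 G0 I1 by (rule amalg_tryD(1)[OF x])
  have carrier: "y \<in> carrier G1" "g1 \<in> carrier G1" "h0 \<in> carrier G1"
    using assms reps_subset K_subset by auto
  have "(g1 \<otimes>\<^bsub>G1\<^esub> b) \<otimes>\<^bsub>G1\<^esub> (h0 \<otimes>\<^bsub>G1\<^esub> y) = g1 \<otimes>\<^bsub>G1\<^esub> ((b \<otimes>\<^bsub>G1\<^esub> h0) \<otimes>\<^bsub>G1\<^esub> y)"
    using carrier assms(2) by (simp add: m_assoc)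
  also have "\<dots> = g1 \<otimes>\<^bsub>G1\<^esub> y \<otimes>\<^bsub>G1\<^esub> (b \<otimes>\<^bsub>G1\<^esub> h0)"
    using carrier assms(2,6) by (simp add: m_assoc)
  finally show ?thesis
    using amalg_j1_eq[OF x assms(4,5)] assms(3,4) subgroup.m_closed[OF subgroup_K]
    by simp
qed

lemma amalg_j2_commutes_with_G0_translation:
  assumes x: "amalg_try G0 G1 G2 I1 I2"
    and k: "k \<in> carrier G2" and h0: "h0 \<in> G0"
    and central: "\<And>y. y \<in> G0 \<Longrightarrow> h0 \<otimes>\<^bsub>G2\<^esub> y = y \<otimes>\<^bsub>G2\<^esub> h0"
    and commute: "h0 \<otimes>\<^bsub>G2\<^esub> k = k \<otimes>\<^bsub>G2\<^esub> h0"
    and u: "(g0, g1, g2) \<in> amalg_U G0 I1 I2" and image: "amalg_j2 G0 G2 I1 I2 k (g0, g1, g2) = (k2, g1, i2)"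
    and g1': "g1' \<in> I1"
  shows "amalg_j2 G0 G2 I1 I2 k (h0 \<otimes>\<^bsub>G2\<^esub> g0, g1', g2) = (h0 \<otimes>\<^bsub>G2\<^esub> k2, g1', i2)"
proof -
  interpret coset_transversal G2 G0 I2 by (rule amalg_tryD(2)[OF x])
  have carrier: "g0 \<in> carrier G2" "g2 \<in> carrier G2" "h0 \<in> carrier G2"
    using u h0 reps_subset K_subset by auto
  then have "g2 \<otimes>\<^bsub>G2\<^esub> g0 \<otimes>\<^bsub>G2\<^esub> k \<in> carrier G2"
    using k by simp
  then obtain i k' where ik: "i \<in> I2" "k' \<in> G0" "i \<otimes>\<^bsub>G2\<^esub> k' = g2 \<otimes>\<^bsub>G2\<^esub> g0 \<otimes>\<^bsub>G2\<^esub> k"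
    by (rule decomp_exists)
  with image amalg_j2_eq[OF x u ik] have k': "k' = k2" "i = i2"
    by simp_all
  have "i2 \<otimes>\<^bsub>G2\<^esub> (h0 \<otimes>\<^bsub>G2\<^esub> k2) = (i2 \<otimes>\<^bsub>G2\<^esub> k2) \<otimes>\<^bsub>G2\<^esub> h0"
    using central[of k2] ik(1,2) k' reps_subset K_subset carrier by (simp add: m_assoc subset_iff)
  also have "\<dots> = g2 \<otimes>\<^bsub>G2\<^esub> g0 \<otimes>\<^bsub>G2\<^esub> (k \<otimes>\<^bsub>G2\<^esub> h0)"
    using ik k' carrier k by (simp add: m_assoc)
  also have "\<dots> = g2 \<otimes>\<^bsub>G2\<^esub> (g0 \<otimes>\<^bsub>G2\<^esub> h0) \<otimes>\<^bsub>G2\<^esub> k"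
    using commute carrier k by (simp add: m_assoc)
  also have "\<dots> = g2 \<otimes>\<^bsub>G2\<^esub> (h0 \<otimes>\<^bsub>G2\<^esub> g0) \<otimes>\<^bsub>G2\<^esub> k"
    using central u by simp
  finally show ?thesis
    using amalg_j2_eq[OF x _ ik(1)] ik k' u h0 g1' subgroup.m_closed[OF subgroup_K]
    by simp
qed

lemma amalg_j1_j2_commute_at:
  assumes x: "amalg_try G0 G1 G2 I1 I2"
    and b: "b \<in> carrier G1" and h0: "h0 \<in> G0" and k: "k \<in> carrier G2"
    and right_closed: "\<And>g1. g1 \<in> I1 \<Longrightarrow> g1 \<otimes>\<^bsub>G1\<^esub> b \<in> I1"
    and commutes: "\<And>y. y \<in> G0 \<Longrightarrow> y \<otimes>\<^bsub>G1\<^esub> (b \<otimes>\<^bsub>G1\<^esub> h0) = (b \<otimes>\<^bsub>G1\<^esub> h0) \<otimes>\<^bsub>G1\<^esub> y"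
    and central: "\<And>y. y \<in> G0 \<Longrightarrow> h0 \<otimes>\<^bsub>G1\<^esub> y = y \<otimes>\<^bsub>G1\<^esub> h0"
    and commute: "h0 \<otimes>\<^bsub>G2\<^esub> k = k \<otimes>\<^bsub>G2\<^esub> h0"
    and u: "u \<in> amalg_U G0 I1 I2"
  shows "amalg_j1 G0 G1 I1 I2 (b \<otimes>\<^bsub>G1\<^esub> h0) (amalg_j2 G0 G2 I1 I2 k u) =
    amalg_j2 G0 G2 I1 I2 k (amalg_j1 G0 G1 I1 I2 (b \<otimes>\<^bsub>G1\<^esub> h0) u)"
proof -
  note same_mult = amalg_tryD(3)[OF x]
  obtain g0 g1 g2 where u_eq: "u = (g0, g1, g2)"
    by (cases u)
  obtain k2 i2 where image: "amalg_j2 G0 G2 I1 I2 k u = (k2, g1, i2)"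
    using u u_eq by (simp add: amalg_j2_apply Let_def)
  then have image_U: "(k2, g1, i2) \<in> amalg_U G0 I1 I2"
    using amalg_j2_maps_to_inverse(1)[OF x k u] by simp
  have central2: "h0 \<otimes>\<^bsub>G2\<^esub> y = y \<otimes>\<^bsub>G2\<^esub> h0" if "y \<in> G0" for y
    using central[OF that] same_mult h0 that by simp
  have "amalg_j1 G0 G1 I1 I2 (b \<otimes>\<^bsub>G1\<^esub> h0) (amalg_j2 G0 G2 I1 I2 k u) =
      (h0 \<otimes>\<^bsub>G2\<^esub> k2, g1 \<otimes>\<^bsub>G1\<^esub> b, i2)"
    using amalg_j1_right_translation[OF x b h0 image_U] image_U image right_closed commutes
      same_mult h0
    by simp
  also have "\<dots> = amalg_j2 G0 G2 I1 I2 k (h0 \<otimes>\<^bsub>G2\<^esub> g0, g1 \<otimes>\<^bsub>G1\<^esub> b, g2)"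
    using amalg_j2_commutes_with_G0_translation[OF x k h0 central2 commute,
        of g0 g1 g2 k2 i2 "g1 \<otimes>\<^bsub>G1\<^esub> b"] u image right_closed
    unfolding u_eq by simp
  also have "\<dots> = amalg_j2 G0 G2 I1 I2 k (amalg_j1 G0 G1 I1 I2 (b \<otimes>\<^bsub>G1\<^esub> h0) u)"
    using amalg_j1_right_translation[OF x b h0] u u_eq right_closed commutes same_mult h0
    by simp
  finally show ?thesis .
qed

theorem claim4p1:
  fixes G0 :: "'a set" and G1 :: "('a, 'b) monoid_scheme" and G2 :: "('a, 'c) monoid_scheme"
    and I1 I2 H1 H2 :: "'a set"
  assumes x: "amalg_try G0 G1 G2 I1 I2"
    and H1: "subgroup H1 G1"
    and H2: "subgroup H2 G2"
    and e: "H1 = (\<Union>b \<in> I1 \<inter> H1. b <#\<^bsub>G1\<^esub> (H1 \<inter> G0))"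
    and f: "\<forall>g \<in> I1. \<forall>b \<in> I1 \<inter> H1. g \<otimes>\<^bsub>G1\<^esub> b \<in> I1"
    and g: "\<forall>a \<in> G0. \<forall>b \<in> H1. a \<otimes>\<^bsub>G1\<^esub> b = b \<otimes>\<^bsub>G1\<^esub> a"
    and h: "\<forall>a \<in> H2. \<forall>b \<in> H1 \<inter> G0. a \<otimes>\<^bsub>G2\<^esub> b = b \<otimes>\<^bsub>G2\<^esub> a"
    and i: "H2 = (\<Union>b \<in> I2 \<inter> H2. b <#\<^bsub>G2\<^esub> (H1 \<inter> G0))"
  shows "\<forall>a \<in> amalg_j1 G0 G1 I1 I2 ` H1. \<forall>c \<in> amalg_j2 G0 G2 I1 I2 ` H2.
           a \<otimes>\<^bsub>amalg_group G0 G1 G2 I1 I2\<^esub> c = c \<otimes>\<^bsub>amalg_group G0 G1 G2 I1 I2\<^esub> a"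
proof (intro ballI)
  let ?U = "amalg_U G0 I1 I2"
  fix a c
  assume "a \<in> amalg_j1 G0 G1 I1 I2 ` H1" "c \<in> amalg_j2 G0 G2 I1 I2 ` H2"
  then obtain h k where hk: "h \<in> H1" "k \<in> H2"
    and ac: "a = amalg_j1 G0 G1 I1 I2 h" "c = amalg_j2 G0 G2 I1 I2 k"
    by blast
  have "h \<in> (\<Union>b \<in> I1 \<inter> H1. b <#\<^bsub>G1\<^esub> (H1 \<inter> G0))"
    using hk(1) by (subst (asm) e)
  then obtain b h0 where b: "b \<in> I1 \<inter> H1" and h0: "h0 \<in> H1 \<inter> G0"
    and h_eq: "h = b \<otimes>\<^bsub>G1\<^esub> h0"
    unfolding l_coset_def by blast
  have carrier: "h \<in> carrier G1" "b \<in> carrier G1" "k \<in> carrier G2"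
    using hk b H1 H2 subgroup.subset by blast+
  have h_H1: "b \<otimes>\<^bsub>G1\<^esub> h0 \<in> H1"
    using subgroup.m_closed[OF H1, of b h0] b h0 by simp
  have "a (c u) = c (a u)" if "u \<in> ?U" for u
    unfolding ac h_eq
  proof (rule amalg_j1_j2_commute_at[OF x carrier(2) _ carrier(3) _ _ _ _ that])
    show "h0 \<in> G0" using h0 by blast
    show "g1 \<otimes>\<^bsub>G1\<^esub> b \<in> I1" if "g1 \<in> I1" for g1
      using f that b by blast
    show "y \<otimes>\<^bsub>G1\<^esub> (b \<otimes>\<^bsub>G1\<^esub> h0) = (b \<otimes>\<^bsub>G1\<^esub> h0) \<otimes>\<^bsub>G1\<^esub> y" if "y \<in> G0" for y
      using bspec[OF bspec[OF g that] h_H1] .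
    show "h0 \<otimes>\<^bsub>G1\<^esub> y = y \<otimes>\<^bsub>G1\<^esub> h0" if "y \<in> G0" for y
      using bspec[OF bspec[OF g that], of h0] h0 by simp
    show "h0 \<otimes>\<^bsub>G2\<^esub> k = k \<otimes>\<^bsub>G2\<^esub> h0"
      using bspec[OF bspec[OF h hk(2)] h0] by simp
  qed
  then have "compose ?U a c = compose ?U c a"
    unfolding compose_def by (intro restrict_ext) simp
  moreover have "a \<in> Bij ?U" "c \<in> Bij ?U"
    using amalg_j1_in_Bij[OF x carrier(1)] amalg_j2_in_Bij[OF x carrier(3)] ac by simp_all
  ultimately show "a \<otimes>\<^bsub>amalg_group G0 G1 G2 I1 I2\<^esub> c = c \<otimes>\<^bsub>amalg_group G0 G1 G2 I1 I2\<^esub> a"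
    by (simp add: amalg_group_mult)
qed

end
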